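(* For every Greene–Kleitman chain $C$ of length $h\ge 5$ in $Q_n$ and any edge $f$ of $C$, there exist $h-1$ pairwise edge-disjoint flipping $4$-cycles, one between $C$ and each of its $h-1$ children, none of which uses the edge $f$.
   Context: $Q_n$ is the hypercube on $\{0,1\}^n$. Let $D$ be the set of bitstrings (including the empty string) with equally many $0$s and $1$s such that every prefix has at least as many $0$s as $1$s. A (Greene–Kleitman) chain of length $h$ is encoded as a string of length $n$ over $\{0,1,*\}$ of the form $u_0*u_1*\cdots*u_{h-1}*u_h$ with all $u_j\in D$; it is the path in $Q_n$ whose vertices are obtained by replacing the $*$s by $i$ ones followed by $h-i$ zeros, $i=0,1,\ldots,h$. A chain $C'$ of length $h-2$ is a child of a chain $C$ of length $h$ if $C'$ is obtained from $C$ by replacing two consecutive $*$s by $0$ and $1$, respectively; a chain of length $h$ has exactly $h-1$ children. A flipping $4$-cycle between two vertex-disjoint paths $P,P'$ is a $4$-cycle in $Q_n$ that shares exactly one edge with each of the two paths. *)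

theory Defs
  imports Main
begin

text \<open>Bits: False = 0, True = 1. Vertices of Q_n are bool lists of length n.\<close>

definition cnt :: "bool \<Rightarrow> bool list \<Rightarrow> nat" where
  "cnt b xs = length (filter (\<lambda>x. x = b) xs)"

definition dyck :: "bool list \<Rightarrow> bool" where
  "dyck xs \<longleftrightarrow> cnt False xs = cnt True xs \<and>
     (\<forall>k \<le> length xs. cnt True (take k xs) \<le> cnt False (take k xs))"

datatype sym = S0 | S1 | SStar

definition of_bit :: "bool \<Rightarrow> sym" where
  "of_bit b = (if b then S1 else S0)"

fun join_star :: "sym list list \<Rightarrow> sym list" where
  "join_star [] = []"
| "join_star [u] = u"
| "join_star (u # us) = u @ SStar # join_star us"

definition is_gk_chain :: "nat \<Rightarrow> nat \<Rightarrow> sym list \<Rightarrow> bool" where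
  "is_gk_chain n h w \<longleftrightarrow> length w = n \<and>
     (\<exists>us. length us = h + 1 \<and> (\<forall>u\<in>set us. dyck u) \<and>
           w = join_star (map (map of_bit) us))"

fun fill :: "nat \<Rightarrow> sym list \<Rightarrow> bool list" where
  "fill i [] = []"
| "fill i (S0 # w) = False # fill i w"
| "fill i (S1 # w) = True # fill i w"
| "fill i (SStar # w) = (0 < i) # fill (i - 1) w"

definition chain_path :: "nat \<Rightarrow> sym list \<Rightarrow> bool list list" where
  "chain_path h w = map (\<lambda>i. fill i w) [0..<h+1]"

fun repl_star :: "nat \<Rightarrow> sym \<Rightarrow> sym list \<Rightarrow> sym list" where
  "repl_star j s [] = []"
| "repl_star j s (SStar # w) =
     (if j = 0 then s # w else SStar # repl_star (j - 1) s w)"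
| "repl_star j s (x # w) = x # repl_star j s w"

definition child :: "nat \<Rightarrow> sym list \<Rightarrow> sym list" where
  "child k w = repl_star k S0 (repl_star (Suc k) S1 w)"

definition hedge :: "nat \<Rightarrow> bool list \<Rightarrow> bool list \<Rightarrow> bool" where
  "hedge n u v \<longleftrightarrow> length u = n \<and> length v = n \<and>
     card {i. i < n \<and> u ! i \<noteq> v ! i} = 1"

definition path_edges :: "bool list list \<Rightarrow> bool list set set" where
  "path_edges vs = {{vs ! i, vs ! Suc i} | i. Suc i < length vs}"

definition is_4cycle :: "nat \<Rightarrow> bool list set set \<Rightarrow> bool" where
  "is_4cycle n Z \<longleftrightarrow> (\<exists>a b c d. distinct [a, b, c, d] \<and>
     hedge n a b \<and> hedge n b c \<and> hedge n c d \<and> hedge n d a \<and>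
     Z = {{a, b}, {b, c}, {c, d}, {d, a}})"

definition flipping_cycle :: "nat \<Rightarrow> bool list set set \<Rightarrow> bool list list \<Rightarrow> bool list list \<Rightarrow> bool" where
  "flipping_cycle n Z P P' \<longleftrightarrow> set P \<inter> set P' = {} \<and> is_4cycle n Z \<and>
     card (Z \<inter> path_edges P) = 1 \<and> card (Z \<inter> path_edges P') = 1"

end

theory Submission
  imports Defs
begin

text \<open>A vertex of the chain or of one of its children is obtained from the word w by writing a bit
  sequence into its h stars: the chain writes i ones followed by zeros, and the k-th child writes
  0 and 1 into stars k and k + 1 and ones followed by zeros into the others. For a chain edge
  e \<notin> {k, k + 1}, which flips star e, flipping in addition star k + 1 (if e < k) or star k
  (if e > k + 1) turns it into a 4-cycle whose opposite edge lies on the k-th child. The chain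
  and all its children are pairwise vertex-disjoint, and each such cycle meets the chain only in
  edge e and has an endpoint on the child in each of its other edges; hence the cycles of
  different children are edge-disjoint once their chain edges differ. So it suffices to assign to
  the children distinct chain edges e \<notin> {k, k + 1} that avoid the forbidden edge, and a
  cyclic shift of the edges does this. Only the number of stars of w matters here.\<close>

fun inst_stars :: "(nat \<Rightarrow> bool) \<Rightarrow> sym list \<Rightarrow> bool list" where
  "inst_stars g [] = []"
| "inst_stars g (S0 # w) = False # inst_stars g w"
| "inst_stars g (S1 # w) = True # inst_stars g w"
| "inst_stars g (SStar # w) = g 0 # inst_stars (\<lambda>t. g (Suc t)) w"

definition nstars :: "sym list \<Rightarrow> nat" where
  "nstars w = length (filter (\<lambda>x. x = SStar) w)"

lemma nstars_simps [simp]: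
  "nstars [] = 0" "nstars (SStar # w) = Suc (nstars w)"
  "nstars (S0 # w) = nstars w" "nstars (S1 # w) = nstars w"
  "nstars (u @ v) = nstars u + nstars v"
  by (auto simp: nstars_def)

lemma length_inst_stars [simp]: "length (inst_stars g w) = length w"
  by (induction g w rule: inst_stars.induct) auto

lemma inst_stars_eq_iff: "inst_stars g w = inst_stars g' w \<longleftrightarrow> (\<forall>t < nstars w. g t = g' t)"
  by (induction g w arbitrary: g' rule: inst_stars.induct) (auto simp: All_less_Suc2)

lemma fill_eq_inst_stars: "fill i w = inst_stars (\<lambda>t. t < i) w"
proof (induction i w rule: fill.induct)
  case (4 i w)
  have "(\<lambda>t. Suc t < i) = (\<lambda>t. t < i - 1)" by auto
  then show ?case using 4 by simp
qed auto

definition insert_bit :: "nat \<Rightarrow> bool \<Rightarrow> (nat \<Rightarrow> bool) \<Rightarrow> nat \<Rightarrow> bool" where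
  "insert_bit j b g t = (if t < j then g t else if t = j then b else g (t - 1))"

lemma inst_stars_repl_star:
  "s \<noteq> SStar \<Longrightarrow> inst_stars g (repl_star j s w) = inst_stars (insert_bit j (s = S1) g) w"
proof (induction j s w arbitrary: g rule: repl_star.induct)
  case (2 j s w)
  show ?case
  proof (cases "j = 0")
    case True
    have "(\<lambda>t. insert_bit 0 (s = S1) g (Suc t)) = g" by (auto simp: insert_bit_def)
    then show ?thesis using True 2(2) by (cases s) (auto simp: insert_bit_def)
  next
    case False
    have shift:
      "(\<lambda>t. insert_bit j (s = S1) g (Suc t)) = insert_bit (j - 1) (s = S1) (\<lambda>t. g (Suc t))"
      using False by (auto simp: insert_bit_def fun_eq_iff)
    have "inst_stars g (repl_star j s (SStar # w))
        = g 0 # inst_stars (insert_bit (j - 1) (s = S1) (\<lambda>t. g (Suc t))) w"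
      using False 2 by simp
    also have "\<dots> = inst_stars (insert_bit j (s = S1) g) (SStar # w)"
      using False shift by (simp add: insert_bit_def)
    finally show ?thesis .
  qed
qed auto

lemma nstars_repl_star:
  "j < nstars w \<Longrightarrow> s \<noteq> SStar \<Longrightarrow> nstars (repl_star j s w) = nstars w - 1"
  by (induction j s w rule: repl_star.induct) (auto simp: nstars_def)

lemma length_repl_star [simp]: "length (repl_star j s w) = length w"
  by (induction j s w rule: repl_star.induct) auto

lemma length_child [simp]: "length (child k w) = length w"
  by (simp add: child_def)

lemma nstars_child: "Suc k < nstars w \<Longrightarrow> nstars (child k w) = nstars w - 2"
  by (simp add: child_def nstars_repl_star)

definition child_bits :: "nat \<Rightarrow> nat \<Rightarrow> nat \<Rightarrow> bool" where
  "child_bits k j t =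
     (if t < k then t < j else if t = k then False else if t = Suc k then True else t - 2 < j)"

lemma fill_child: "fill j (child k w) = inst_stars (child_bits k j) w"
proof -
  have "insert_bit (Suc k) True (insert_bit k False (\<lambda>t. t < j)) = child_bits k j"
    by (auto simp: insert_bit_def child_bits_def fun_eq_iff)
  then show ?thesis
    by (simp add: child_def fill_eq_inst_stars inst_stars_repl_star)
qed

lemma child_bits_below: "j \<le> k \<Longrightarrow> child_bits k j = (\<lambda>t. t < j)(Suc k := True)"
  by (auto simp: child_bits_def fun_eq_iff)

lemma child_bits_above: "k + 2 \<le> j \<Longrightarrow> child_bits k (j - 2) = (\<lambda>t. t < j)(k := False)"
  by (auto simp: child_bits_def fun_eq_iff)

lemma hedge_commute: "hedge n u v \<longleftrightarrow> hedge n v u"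
proof -
  have "{i. i < n \<and> u ! i \<noteq> v ! i} = {i. i < n \<and> v ! i \<noteq> u ! i}" by auto
  then show ?thesis unfolding hedge_def by auto
qed

lemma card_less_eq_sum: "card {t. t < (N::nat) \<and> P t} = (\<Sum>t<N. if P t then 1 else 0)"
proof (induction N)
  case (Suc N)
  have "{t. t < Suc N \<and> P t} = {t. t < N \<and> P t} \<union> (if P N then {N} else {})"
    using less_Suc_eq by auto
  then show ?case using Suc by auto
qed simp

lemma sum_diff_inst_stars:
  "(\<Sum>i<length w. if inst_stars g w ! i \<noteq> inst_stars g' w ! i then 1 else (0::nat))
     = (\<Sum>t<nstars w. if g t \<noteq> g' t then 1 else 0)"
  by (induction g w arbitrary: g' rule: inst_stars.induct)
     (auto simp del: sum.lessThan_Suc simp: sum.lessThan_Suc_shift)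

lemma hedge_inst_stars_iff:
  "hedge (length w) (inst_stars g w) (inst_stars g' w) \<longleftrightarrow>
     card {t. t < nstars w \<and> g t \<noteq> g' t} = 1"
  unfolding hedge_def card_less_eq_sum sum_diff_inst_stars by simp

lemma hedge_inst_stars_upd:
  assumes "s < nstars w" and "g s \<noteq> b"
  shows "hedge (length w) (inst_stars g w) (inst_stars (g(s := b)) w)"
proof -
  have "{t. t < nstars w \<and> g t \<noteq> (g(s := b)) t} = {s}" using assms by auto
  then show ?thesis by (simp add: hedge_inst_stars_iff)
qed

lemma hedge_fill_Suc:
  assumes "i < nstars w"
  shows "hedge (length w) (fill i w) (fill (Suc i) w)"
proof -
  have "(\<lambda>t. t < Suc i) = (\<lambda>t. t < i)(i := True)" by (auto simp: fun_eq_iff)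
  then show ?thesis
    unfolding fill_eq_inst_stars using assms by (simp add: hedge_inst_stars_upd)
qed

lemma fill_inj:
  assumes "i \<le> nstars w" and "i' \<le> nstars w" and "fill i w = fill i' w"
  shows "i = i'"
proof (rule ccontr)
  assume "i \<noteq> i'"
  then have "min i i' < nstars w" and "(min i i' < i) \<noteq> (min i i' < i')"
    using assms(1,2) by auto
  then show False using assms(3) by (auto simp: fill_eq_inst_stars inst_stars_eq_iff)
qed

lemma fill_edge_inj:
  assumes "i < nstars w" and "i' < nstars w"
    and "{fill i w, fill (Suc i) w} = {fill i' w, fill (Suc i') w}"
  shows "i = i'"
  using assms fill_inj[of i w i'] fill_inj[of i w "Suc i'"] fill_inj[of "Suc i" w i']
  by (auto simp: doubleton_eq_iff)

text \<open>The vertices of the k-th child have stars k and k + 1 set to 0 and 1, while along the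
  chain (and along every child k' < k) the stars from k onwards carry ones followed by zeros.\<close>

lemma fill_ne_fill_child:
  assumes "Suc k < nstars w"
  shows "fill i w \<noteq> fill j (child k w)"
proof
  assume "fill i w = fill j (child k w)"
  then have "(k < i) = child_bits k j k" and "(Suc k < i) = child_bits k j (Suc k)"
    using assms unfolding fill_child unfolding fill_eq_inst_stars inst_stars_eq_iff by auto
  then show False by (simp add: child_bits_def)
qed

lemma fill_child_ne_fill_child:
  assumes "k < k'" and "Suc k' < nstars w"
  shows "fill j (child k w) \<noteq> fill j' (child k' w)"
proof
  assume "fill j (child k w) = fill j' (child k' w)"
  then have "child_bits k j k' = child_bits k' j' k'"
    and "child_bits k j (Suc k') = child_bits k' j' (Suc k')"
    using assms unfolding fill_child inst_stars_eq_iff by auto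
  then show False using assms(1) by (auto simp: child_bits_def split: if_splits)
qed

lemma path_edges_map_upt:
  "path_edges (map f [0..<Suc N]) = {{f i, f (Suc i)} | i. i < N}" (is "?L = ?R")
proof
  show "?L \<subseteq> ?R" unfolding path_edges_def by (auto simp del: upt_Suc)
  show "?R \<subseteq> ?L"
  proof
    fix E assume "E \<in> ?R"
    then obtain i where "i < N" "E = {f i, f (Suc i)}" by blast
    then show "E \<in> ?L"
      unfolding path_edges_def by (intro CollectI exI[of _ i]) (auto simp del: upt_Suc)
  qed
qed

lemma path_edges_chain_path: "path_edges (chain_path h w) = {{fill i w, fill (Suc i) w} | i. i < h}"
  unfolding chain_path_def Suc_eq_plus1 [symmetric] path_edges_map_upt ..

lemma set_chain_path: "set (chain_path h w) = {fill i w | i. i \<le> h}"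
  unfolding chain_path_def by (auto simp del: upt_Suc simp: less_Suc_eq_le)

text \<open>The vertex of child k adjacent to vertex i of the chain, for i \<noteq> k + 1.\<close>
definition child_index :: "nat \<Rightarrow> nat \<Rightarrow> nat" where
  "child_index k i = (if i \<le> k then i else i - 2)"

lemma hedge_fill_child:
  assumes "i \<noteq> Suc k" and "i \<le> nstars w" and "Suc k < nstars w"
  shows "hedge (length w) (fill i w) (fill (child_index k i) (child k w))"
proof (cases "i \<le> k")
  case True
  then show ?thesis
    unfolding child_index_def if_P[OF True] fill_child child_bits_below[OF True]
    unfolding fill_eq_inst_stars
    using assms by (simp add: hedge_inst_stars_upd)
next
  case False
  then have above: "k + 2 \<le> i" using assms(1) by simp
  show ?thesis
    unfolding child_index_def fill_child if_not_P[OF False] child_bits_above[OF above]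
    unfolding fill_eq_inst_stars using assms above by (simp add: hedge_inst_stars_upd)
qed

definition square :: "'a \<Rightarrow> 'a \<Rightarrow> 'a \<Rightarrow> 'a \<Rightarrow> 'a set set" where
  "square a b c d = {{a, b}, {b, c}, {c, d}, {d, a}}"

lemma flipping_cycle_square:
  assumes disj: "set P \<inter> set P' = {}"
    and ab: "{a, b} \<in> path_edges P" and cd: "{c, d} \<in> path_edges P'"
    and "hedge n a b" "hedge n b c" "hedge n c d" "hedge n d a"
  shows "flipping_cycle n (square a b c d) P P'"
proof -
  have sub: "E \<subseteq> set Q" if "E \<in> path_edges Q" for E Q
    using that unfolding path_edges_def by auto
  have "a \<in> set P" "b \<in> set P" "c \<in> set P'" "d \<in> set P'"
    using sub[OF ab] sub[OF cd] by auto
  then have "a \<noteq> c" "b \<noteq> d" "c \<notin> set P" "d \<notin> set P" "a \<notin> set P'" "b \<notin> set P'"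
    using disj by auto
  moreover have "a \<noteq> b" "b \<noteq> c" "c \<noteq> d" "d \<noteq> a"
    using assms(4-7) unfolding hedge_def by auto
  ultimately have "is_4cycle n (square a b c d)"
    unfolding is_4cycle_def square_def using assms(4-7)
    by (intro exI[of _ a] exI[of _ b] exI[of _ c] exI[of _ d]) simp
  moreover have "square a b c d \<inter> path_edges P = {{a, b}}"
    using ab sub[of _ P] \<open>c \<notin> set P\<close> \<open>d \<notin> set P\<close> unfolding square_def by auto
  moreover have "square a b c d \<inter> path_edges P' = {{c, d}}"
    using cd sub[of _ P'] \<open>a \<notin> set P'\<close> \<open>b \<notin> set P'\<close> unfolding square_def by auto
  ultimately show ?thesis
    unfolding flipping_cycle_def using disj by simp
qed

lemma doubleton_notin_square:
  assumes "x \<in> P" "y \<in> P" "c \<notin> P" "d \<notin> P" "{x, y} \<noteq> {a, b}"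
  shows "{x, y} \<notin> square a b c d"
  using assms unfolding square_def by (auto simp: doubleton_eq_iff)

lemma squares_disjoint:
  assumes "a \<in> P" "b \<in> P" "c \<in> Q" "d \<in> Q" "a' \<in> P" "b' \<in> P" "c' \<in> Q'" "d' \<in> Q'"
    and "P \<inter> Q = {}" "P \<inter> Q' = {}" "Q \<inter> Q' = {}" "{a, b} \<noteq> {a', b'}"
  shows "square a b c d \<inter> square a' b' c' d' = {}"
  using assms unfolding square_def by (auto simp: doubleton_eq_iff)

definition child_square :: "sym list \<Rightarrow> nat \<Rightarrow> nat \<Rightarrow> bool list set set" where
  "child_square w k e = square (fill e w) (fill (Suc e) w)
     (fill (child_index k (Suc e)) (child k w)) (fill (child_index k e) (child k w))"

lemma flipping_cycle_child_square:
  assumes h: "nstars w = h" and n: "length w = n"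
    and k: "Suc k < h" and e: "e < h" "e \<noteq> k" "e \<noteq> Suc k"
  shows "flipping_cycle n (child_square w k e) (chain_path h w) (chain_path (h - 2) (child k w))"
proof -
  let ?j = "child_index k e"
  have j: "child_index k (Suc e) = Suc ?j" "?j < h - 2"
    using k e unfolding child_index_def by auto
  have disj: "set (chain_path h w) \<inter> set (chain_path (h - 2) (child k w)) = {}"
    unfolding set_chain_path using fill_ne_fill_child k h by blast
  have ab: "{fill e w, fill (Suc e) w} \<in> path_edges (chain_path h w)"
    unfolding path_edges_chain_path using e by blast
  have cd: "{fill (Suc ?j) (child k w), fill ?j (child k w)}
      \<in> path_edges (chain_path (h - 2) (child k w))"
    unfolding path_edges_chain_path using j by (auto simp: insert_commute)
  have hab: "hedge n (fill e w) (fill (Suc e) w)"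
    using hedge_fill_Suc[of e w] e h n by simp
  have hcd: "hedge n (fill (Suc ?j) (child k w)) (fill ?j (child k w))"
    using hedge_fill_Suc[of ?j "child k w"] nstars_child[of k w] j k h n
    by (simp add: hedge_commute)
  have hbc: "hedge n (fill (Suc e) w) (fill (Suc ?j) (child k w))"
    using hedge_fill_child[of "Suc e" k w] j k e h n by simp
  have hda: "hedge n (fill ?j (child k w)) (fill e w)"
    using hedge_fill_child[of e k w] k e h n by (simp add: hedge_commute)
  show ?thesis
    unfolding child_square_def j(1) by (rule flipping_cycle_square[OF disj ab cd hab hbc hcd hda])
qed

lemma edge_notin_child_square:
  assumes "Suc k < nstars w" and "m < nstars w" and "e < nstars w" and "m \<noteq> e"
  shows "{fill m w, fill (Suc m) w} \<notin> child_square w k e"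
  unfolding child_square_def
proof (rule doubleton_notin_square[where P = "range (\<lambda>i. fill i w)"])
  show "fill (child_index k (Suc e)) (child k w) \<notin> range (\<lambda>i. fill i w)"
    and "fill (child_index k e) (child k w) \<notin> range (\<lambda>i. fill i w)"
    using fill_ne_fill_child[OF assms(1)] by (metis imageE)+
  show "{fill m w, fill (Suc m) w} \<noteq> {fill e w, fill (Suc e) w}"
    using fill_edge_inj assms(2-4) by blast
qed auto

lemma child_squares_disjoint:
  assumes "Suc k < nstars w" and "Suc k' < nstars w" and "k \<noteq> k'"
    and "e < nstars w" and "e' < nstars w" and "e \<noteq> e'"
  shows "child_square w k e \<inter> child_square w k' e' = {}"
proof -
  let ?P = "range (\<lambda>i. fill i w)" and ?Q = "\<lambda>k. range (\<lambda>j. fill j (child k w))"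
  have "fill j (child k w) \<noteq> fill j' (child k' w)" for j j'
  proof (cases "k < k'")
    case True
    then show ?thesis using fill_child_ne_fill_child assms(2) by blast
  next
    case False
    then have "k' < k" using assms(3) by simp
    then show ?thesis using fill_child_ne_fill_child assms(1) by metis
  qed
  then have QQ': "?Q k \<inter> ?Q k' = {}" by blast
  have PQ: "?P \<inter> ?Q k = {}" and PQ': "?P \<inter> ?Q k' = {}"
    using fill_ne_fill_child assms(1,2) by blast+
  have ne: "{fill e w, fill (Suc e) w} \<noteq> {fill e' w, fill (Suc e') w}"
    using fill_edge_inj assms(4-6) by blast
  show ?thesis
    unfolding child_square_def by (rule squares_disjoint[OF _ _ _ _ _ _ _ _ PQ PQ' QQ' ne]) auto
qed

text \<open>The cyclic shift of the chain edges by m + 1, modified for m = 0 and m = h - 1, where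
  it would hit k or k + 1.\<close>
definition edge_choice :: "nat \<Rightarrow> nat \<Rightarrow> nat \<Rightarrow> nat" where
  "edge_choice h m k =
     (if m = 0 then (if k = h - 2 then 1 else k + 2)
      else if m = h - 1 then (if k = 0 then h - 2 else k - 1)
      else if k + m + 1 < h then k + m + 1 else k + m + 1 - h)"

lemma edge_choice_avoids:
  assumes "4 \<le> h" and "m < h" and "Suc k < h"
  shows "edge_choice h m k < h" "edge_choice h m k \<noteq> k" "edge_choice h m k \<noteq> Suc k"
    "edge_choice h m k \<noteq> m"
  using assms unfolding edge_choice_def by auto

lemma inj_on_edge_choice: "4 \<le> h \<Longrightarrow> m < h \<Longrightarrow> inj_on (edge_choice h m) {..<h - 1}"
  unfolding inj_on_def edge_choice_def by (auto split: if_splits)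

lemma nstars_join_star: "nstars (join_star (map (map of_bit) us)) = length us - 1"
proof (induction us)
  case (Cons u us)
  have "nstars (map of_bit u) = 0" by (induction u) (auto simp: of_bit_def)
  then show ?case using Cons by (cases us) auto
qed simp

theorem lemma13:
  fixes n h :: nat and w :: "sym list" and f :: "bool list set"
  assumes "is_gk_chain n h w" and "h \<ge> 5"
    and "f \<in> path_edges (chain_path h w)"
  shows "\<exists>cyc :: nat \<Rightarrow> bool list set set.
           (\<forall>k < h - 1. flipping_cycle n (cyc k) (chain_path h w) (chain_path (h - 2) (child k w))
                        \<and> f \<notin> cyc k) \<and>
           (\<forall>k < h - 1. \<forall>k' < h - 1. k \<noteq> k' \<longrightarrow> cyc k \<inter> cyc k' = {})"
proof -
  have h: "nstars w = h" and n: "length w = n"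
    using assms(1) nstars_join_star unfolding is_gk_chain_def by auto
  have h4: "4 \<le> h" using assms(2) by simp
  obtain m where m: "m < h" and f: "f = {fill m w, fill (Suc m) w}"
    using assms(3) unfolding path_edges_chain_path by blast
  let ?e = "edge_choice h m"
  note e = edge_choice_avoids[OF h4 m] and inj = inj_on_edge_choice[OF h4 m]
  show ?thesis
  proof (intro exI[of _ "\<lambda>k. child_square w k (?e k)"] conjI allI impI)
    fix k assume "k < h - 1"
    then have k: "Suc k < h" by simp
    show "flipping_cycle n (child_square w k (?e k)) (chain_path h w) (chain_path (h - 2) (child k w))"
      using flipping_cycle_child_square[OF h n k e(1-3)[OF k]] .
    show "f \<notin> child_square w k (?e k)"
      unfolding f using edge_notin_child_square[of k w m "?e k"] e[OF k] m h k by simp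
  next
    fix k k' assume kk': "k < h - 1" "k' < h - 1" "k \<noteq> k'"
    then have "?e k \<noteq> ?e k'" using inj_onD[OF inj] by blast
    with kk' show "child_square w k (?e k) \<inter> child_square w k' (?e k') = {}"
      using child_squares_disjoint[of k w k' "?e k" "?e k'"] e(1) h by simp
  qed
qed

end
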